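(* Let $G$ be a finitely generated group and fix $S\in\Gamma_n(G)$. Let $\alpha>1$ be a constant and $(k_i)_{i\ge1}$ a log-dense sequence. Suppose that for each $i\ge1$ there is a path $\gamma$ in $\Gamma_n(G)$ of length at most $\alpha k_i$ which starts at $S$ and visits some vertices $S_1,\dots,S_{k_i}\in\Gamma_n(G)$ in that order, and that there is a cubic $k_i$-tuple $(g_1,\dots,g_{k_i})$ with $g_j$ an entry of $S_j$ for each $1\le j\le k_i$. Then $\Gamma_m(G,S)$ has exponential growth for every $m\ge n+1$.
   Context: For a group $G$, a generating $n$-tuple is $(g_1,\dots,g_n)\in G^n$ generating $G$. The product replacement graph $\Gamma_n(G)$ has vertices the generating $n$-tuples, with edges from $(g_1,\dots,g_n)$ to each tuple obtained by replacing $g_j$ by $g_jg_i^{\pm1}$ or $g_i^{\pm1}g_j$, for every ordered pair $i\neq j$. For $S=(g_1,\dots,g_n)$ and $m\ge n$, $\Gamma_m(G,S)$ is the connected component of $\Gamma_m(G)$ containing $(g_1,\dots,g_n,1,\dots,1)$ ($m-n$ identity entries). A connected graph has exponential growth if for some vertex $v$ there is $\alpha>1$ such that the number of vertices at distance at most $r$ from $v$ is at least $\alpha^r$ for all sufficiently large $r$. A sequence of positive integers $(k_i)$ is log-dense if it is increasing and $k_{i+1}\le\beta k_i$ for some constant $\beta$ and all $i$. A tuple $(g_1,\dots,g_k)\in G^k$ is cubic if the set $\{g_1^{\varepsilon_1}g_2^{\varepsilon_2}\cdots g_k^{\varepsilon_k}:\varepsilon_j\in\{0,1\}\}$ has exactly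 $2^k$ elements. *)

theory Defs
  imports Complex_Main "HOL-Algebra.Generated_Groups"
begin

definition fin_gen_group :: "('a, 'b) monoid_scheme \<Rightarrow> bool" where
  "fin_gen_group G \<longleftrightarrow> group G \<and>
     (\<exists>A. finite A \<and> A \<subseteq> carrier G \<and> generate G A = carrier G)"

text \<open>Vertices of the product replacement graph: generating n-tuples.\<close>
definition gen_tuples :: "('a, 'b) monoid_scheme \<Rightarrow> nat \<Rightarrow> 'a list set" where
  "gen_tuples G n = {xs. length xs = n \<and> set xs \<subseteq> carrier G \<and> generate G (set xs) = carrier G}"

definition prr_step :: "('a, 'b) monoid_scheme \<Rightarrow> 'a list \<Rightarrow> 'a list \<Rightarrow> bool" where
  "prr_step G xs ys \<longleftrightarrow> (\<exists>i j. i < length xs \<and> j < length xs \<and> i \<noteq> j \<and>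
     (ys = xs[j := xs!j \<otimes>\<^bsub>G\<^esub> xs!i] \<or>
      ys = xs[j := xs!j \<otimes>\<^bsub>G\<^esub> inv\<^bsub>G\<^esub> (xs!i)] \<or>
      ys = xs[j := xs!i \<otimes>\<^bsub>G\<^esub> xs!j] \<or>
      ys = xs[j := inv\<^bsub>G\<^esub> (xs!i) \<otimes>\<^bsub>G\<^esub> xs!j]))"

text \<open>A path (walk) in \<Gamma>_n(G), given as its nonempty list of vertices;
  its length is the number of edges, i.e. length p - 1.\<close>
definition prr_walk :: "('a, 'b) monoid_scheme \<Rightarrow> nat \<Rightarrow> 'a list list \<Rightarrow> bool" where
  "prr_walk G n p \<longleftrightarrow> p \<noteq> [] \<and> set p \<subseteq> gen_tuples G n \<and>
     (\<forall>t. t + 1 < length p \<longrightarrow> prr_step G (p!t) (p!(t+1)))"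

definition prr_component :: "('a, 'b) monoid_scheme \<Rightarrow> nat \<Rightarrow> 'a list \<Rightarrow> 'a list set" where
  "prr_component G m v = {w. \<exists>p. prr_walk G m p \<and> hd p = v \<and> last p = w}"

definition prr_ball :: "('a, 'b) monoid_scheme \<Rightarrow> nat \<Rightarrow> 'a list \<Rightarrow> nat \<Rightarrow> 'a list set" where
  "prr_ball G m v r = {w. \<exists>p. prr_walk G m p \<and> hd p = v \<and> last p = w \<and> length p - 1 \<le> r}"

definition prr_graph_S :: "('a, 'b) monoid_scheme \<Rightarrow> nat \<Rightarrow> 'a list \<Rightarrow> 'a list set" where
  "prr_graph_S G m S = prr_component G m (S @ replicate (m - length S) \<one>\<^bsub>G\<^esub>)"

definition exp_growth :: "('a, 'b) monoid_scheme \<Rightarrow> nat \<Rightarrow> 'a list set \<Rightarrow> bool" where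
  "exp_growth G m C \<longleftrightarrow> (\<exists>v\<in>C. \<exists>a::real. a > 1 \<and>
      (\<forall>\<^sub>F r in sequentially. a ^ r \<le> real (card (prr_ball G m v r))))"

definition log_dense :: "(nat \<Rightarrow> nat) \<Rightarrow> bool" where
  "log_dense k \<longleftrightarrow> (\<forall>i. k i > 0) \<and> strict_mono k \<and> (\<exists>\<beta>::real. \<forall>i. real (k (Suc i)) \<le> \<beta> * real (k i))"

fun subprod :: "('a, 'b) monoid_scheme \<Rightarrow> 'a list \<Rightarrow> bool list \<Rightarrow> 'a" where
  "subprod G (g # gs) (e # es) = (if e then g else \<one>\<^bsub>G\<^esub>) \<otimes>\<^bsub>G\<^esub> subprod G gs es"
| "subprod G _ _ = \<one>\<^bsub>G\<^esub>"

definition cubic :: "('a, 'b) monoid_scheme \<Rightarrow> 'a list \<Rightarrow> bool" where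
  "cubic G gs \<longleftrightarrow> card {subprod G gs es | es. length es = length gs} = 2 ^ length gs"

end

theory Submission
  imports Defs
begin

text \<open>Append one extra coordinate to the n-tuples and use it as a register. Follow the path
  \<gamma>; at the vertex S_j either right-multiply the register by g_j, which is a single edge
  because g_j is an entry of the current tuple, or do nothing. The steps of \<gamma> lift to the
  extended tuples, so every subproduct g_1^{e_1} \<cdots> g_k^{e_k} occurs as the register of a
  vertex within distance |\<gamma>| + k_i \<le> (\<alpha> + 1) k_i of (S, 1, \<dots>, 1); by cubicity these are
  2^{k_i} distinct vertices. Log-density of (k_i) fills the gaps between the radii
  (\<alpha> + 1) k_i and yields exponential growth.\<close>

lemma prr_walk_singleton: "v \<in> gen_tuples G m \<Longrightarrow> prr_walk G m [v]"
  unfolding prr_walk_def by simp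

lemma prr_walk_nth_in_gen_tuples: "prr_walk G n p \<Longrightarrow> t < length p \<Longrightarrow> p ! t \<in> gen_tuples G n"
  unfolding prr_walk_def by (meson nth_mem subsetD)

lemma self_in_prr_component: "v \<in> gen_tuples G m \<Longrightarrow> v \<in> prr_component G m v"
  unfolding prr_component_def using prr_walk_singleton by fastforce

lemma prr_walk_snoc:
  assumes p: "prr_walk G m p" and step: "prr_step G (last p) w" and w: "w \<in> gen_tuples G m"
  shows "prr_walk G m (p @ [w])"
  unfolding prr_walk_def
proof (intro conjI allI impI)
  show "set (p @ [w]) \<subseteq> gen_tuples G m" using p w unfolding prr_walk_def by auto
  fix t assume t: "t + 1 < length (p @ [w])"
  show "prr_step G ((p @ [w]) ! t) ((p @ [w]) ! (t + 1))"
  proof (cases "t + 1 < length p")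
    case True
    then show ?thesis using p unfolding prr_walk_def by (simp add: nth_append)
  next
    case False
    then have "t = length p - 1" "p \<noteq> []" using t p unfolding prr_walk_def by auto
    then show ?thesis using step by (simp add: nth_append last_conv_nth)
  qed
qed simp

lemma prr_walk_butlast:
  assumes p: "prr_walk G m p" and len: "length p \<ge> 2"
  shows "prr_walk G m (butlast p)" and "prr_step G (last (butlast p)) (last p)"
proof -
  have "butlast p \<noteq> []" using len by (cases p) auto
  then show "prr_walk G m (butlast p)"
    using p unfolding prr_walk_def by (auto simp: nth_butlast dest: in_set_butlastD)
  obtain q b a where q: "p = q @ [b, a]"
    using len by (cases p rule: rev_cases; cases "butlast p" rule: rev_cases) auto
  have "prr_step G (p ! length q) (p ! (length q + 1))"
    using p q unfolding prr_walk_def by (simp only: length_append) auto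
  moreover have "p ! length q = b" "p ! (length q + 1) = a"
    using q by (simp_all add: nth_append)
  ultimately show "prr_step G (last (butlast p)) (last p)"
    using q by (simp add: butlast_append)
qed

lemma prr_ball_0: "prr_ball G m v 0 = {v} \<inter> gen_tuples G m"
proof (intro equalityI subsetI)
  fix w assume "w \<in> prr_ball G m v 0"
  then obtain p where p: "prr_walk G m p" "hd p = v" "last p = w" "length p \<le> 1"
    unfolding prr_ball_def by auto
  then have "p = [v]" unfolding prr_walk_def by (cases p) auto
  then show "w \<in> {v} \<inter> gen_tuples G m" using p unfolding prr_walk_def by auto
next
  fix w assume "w \<in> {v} \<inter> gen_tuples G m"
  then show "w \<in> prr_ball G m v 0"
    unfolding prr_ball_def using prr_walk_singleton by fastforce
qed

lemma prr_ball_mono: "d \<le> d' \<Longrightarrow> prr_ball G m v d \<subseteq> prr_ball G m v d'"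
  unfolding prr_ball_def by auto

lemma prr_ball_Suc:
  "prr_ball G m v (Suc d) =
     prr_ball G m v d \<union> {w \<in> gen_tuples G m. \<exists>u \<in> prr_ball G m v d. prr_step G u w}"
proof (intro equalityI subsetI)
  fix w assume "w \<in> prr_ball G m v (Suc d)"
  then obtain p where p: "prr_walk G m p" "hd p = v" "last p = w" "length p \<le> d + 2"
    unfolding prr_ball_def by auto
  show "w \<in> prr_ball G m v d \<union> {w \<in> gen_tuples G m. \<exists>u \<in> prr_ball G m v d. prr_step G u w}"
  proof (cases "length p \<ge> 2")
    case True
    have "hd (butlast p) = hd p" using True by (cases p) auto
    then have "last (butlast p) \<in> prr_ball G m v d"
      using p prr_walk_butlast(1)[OF p(1) True] unfolding prr_ball_def by fastforce
    moreover have "w \<in> gen_tuples G m"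
      using p unfolding prr_walk_def by auto
    ultimately show ?thesis
      using prr_walk_butlast(2)[OF p(1) True] p(3) by blast
  next
    case False
    then show ?thesis using p unfolding prr_ball_def by auto
  qed
next
  fix w assume "w \<in> prr_ball G m v d \<union> {w \<in> gen_tuples G m. \<exists>u \<in> prr_ball G m v d. prr_step G u w}"
  then consider "w \<in> prr_ball G m v d"
    | u where "u \<in> prr_ball G m v d" "prr_step G u w" "w \<in> gen_tuples G m" by blast
  then show "w \<in> prr_ball G m v (Suc d)"
  proof cases
    case 1
    then show ?thesis using prr_ball_mono[of d "Suc d"] by auto
  next
    case 2
    then obtain p where p: "prr_walk G m p" "hd p = v" "last p = u" "length p - 1 \<le> d"
      unfolding prr_ball_def by blast
    have "prr_walk G m (p @ [w])" using prr_walk_snoc p 2 by blast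
    moreover have "hd (p @ [w]) = v" using p unfolding prr_walk_def by simp
    ultimately show ?thesis unfolding prr_ball_def using p(4) by fastforce
  qed
qed

lemma finite_prr_step_successors: "finite {ys. prr_step G xs ys}"
proof -
  let ?moves = "\<lambda>i j. {xs[j := xs!j \<otimes>\<^bsub>G\<^esub> xs!i], xs[j := xs!j \<otimes>\<^bsub>G\<^esub> inv\<^bsub>G\<^esub> (xs!i)],
                       xs[j := xs!i \<otimes>\<^bsub>G\<^esub> xs!j], xs[j := inv\<^bsub>G\<^esub> (xs!i) \<otimes>\<^bsub>G\<^esub> xs!j]}"
  have "{ys. prr_step G xs ys} \<subseteq> (\<Union>i<length xs. \<Union>j<length xs. ?moves i j)"
    unfolding prr_step_def by blast
  then show ?thesis by (rule finite_subset) simp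
qed

lemma finite_prr_ball: "finite (prr_ball G m v r)"
proof (induction r)
  case 0
  then show ?case by (simp add: prr_ball_0)
next
  case (Suc r)
  have "{w \<in> gen_tuples G m. \<exists>u \<in> prr_ball G m v r. prr_step G u w}
          \<subseteq> (\<Union>u \<in> prr_ball G m v r. {w. prr_step G u w})"
    by blast
  moreover have "finite (\<Union>u \<in> prr_ball G m v r. {w. prr_step G u w})"
    using Suc.IH finite_prr_step_successors by blast
  ultimately show ?case
    unfolding prr_ball_Suc using Suc.IH by (blast intro: finite_subset)
qed

definition extend_tuple :: "('a, 'b) monoid_scheme \<Rightarrow> nat \<Rightarrow> 'a list \<Rightarrow> 'a \<Rightarrow> 'a list" where
  "extend_tuple G m xs x = xs @ x # replicate (m - Suc (length xs)) \<one>\<^bsub>G\<^esub>"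

lemma extend_tuple_one:
  "length xs < m \<Longrightarrow> extend_tuple G m xs \<one>\<^bsub>G\<^esub> = xs @ replicate (m - length xs) \<one>\<^bsub>G\<^esub>"
  unfolding extend_tuple_def by (simp add: Suc_diff_Suc flip: replicate_Suc)

lemma inj_extend_tuple: "inj (extend_tuple G m xs)"
  unfolding extend_tuple_def by (rule injI) simp

lemma (in group) extend_tuple_in_gen_tuples:
  assumes xs: "xs \<in> gen_tuples G n" and x: "x \<in> carrier G" and "n < m"
  shows "extend_tuple G m xs x \<in> gen_tuples G m"
proof -
  let ?E = "extend_tuple G m xs x"
  have xs_carrier: "set xs \<subseteq> carrier G" and xs_gen: "generate G (set xs) = carrier G"
    and "length xs = n"
    using xs unfolding gen_tuples_def by auto
  then have "length ?E = m"
    using \<open>n < m\<close> unfolding extend_tuple_def by simp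
  moreover have E_carrier: "set ?E \<subseteq> carrier G"
    using xs_carrier x unfolding extend_tuple_def by auto
  moreover have "generate G (set ?E) = carrier G"
  proof (rule equalityI)
    show "generate G (set ?E) \<subseteq> carrier G" using E_carrier by (rule generate_incl)
    have "set xs \<subseteq> set ?E" unfolding extend_tuple_def by auto
    then show "carrier G \<subseteq> generate G (set ?E)"
      unfolding xs_gen[symmetric] by (rule mono_generate)
  qed
  ultimately show ?thesis unfolding gen_tuples_def by auto
qed

lemma (in group) extend_tuple_one_in_prr_graph_S:
  assumes "S \<in> gen_tuples G n" "n < m"
  shows "extend_tuple G m S \<one> \<in> prr_graph_S G m S"
proof -
  have "length S < m" using assms unfolding gen_tuples_def by simp
  then have "prr_graph_S G m S = prr_component G m (extend_tuple G m S \<one>)"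
    unfolding prr_graph_S_def by (simp add: extend_tuple_one)
  then show ?thesis
    using self_in_prr_component extend_tuple_in_gen_tuples[OF assms(1) one_closed assms(2)] by simp
qed

lemma prr_step_extend_tuple:
  assumes "prr_step G xs ys"
  shows "prr_step G (extend_tuple G m xs x) (extend_tuple G m ys x)"
proof -
  obtain i j where ij: "i < length xs" "j < length xs" "i \<noteq> j"
    "ys = xs[j := xs!j \<otimes>\<^bsub>G\<^esub> xs!i] \<or> ys = xs[j := xs!j \<otimes>\<^bsub>G\<^esub> inv\<^bsub>G\<^esub> (xs!i)] \<or>
     ys = xs[j := xs!i \<otimes>\<^bsub>G\<^esub> xs!j] \<or> ys = xs[j := inv\<^bsub>G\<^esub> (xs!i) \<otimes>\<^bsub>G\<^esub> xs!j]"
    using assms unfolding prr_step_def by blast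
  let ?E = "extend_tuple G m xs x"
  have "?E ! i = xs ! i" "?E ! j = xs ! j" "i < length ?E" "j < length ?E"
    using ij unfolding extend_tuple_def by (simp_all add: nth_append)
  moreover have "extend_tuple G m (xs[j := c]) x = ?E[j := c]" for c
    using ij unfolding extend_tuple_def by (simp add: list_update_append)
  ultimately show ?thesis
    unfolding prr_step_def using ij by (intro exI[of _ i] exI[of _ j]) auto
qed

lemma prr_step_extend_tuple_mult:
  assumes "i < length xs" "length xs < m"
  shows "prr_step G (extend_tuple G m xs x) (extend_tuple G m xs (x \<otimes>\<^bsub>G\<^esub> xs ! i))"
proof -
  let ?E = "extend_tuple G m xs x" and ?n = "length xs"
  have "?E ! i = xs ! i" "?E ! ?n = x" "i < length ?E" "?n < length ?E"
    using assms unfolding extend_tuple_def by (simp_all add: nth_append)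
  moreover have "extend_tuple G m xs (x \<otimes>\<^bsub>G\<^esub> xs ! i) = ?E[?n := x \<otimes>\<^bsub>G\<^esub> xs ! i]"
    unfolding extend_tuple_def by simp
  ultimately show ?thesis
    unfolding prr_step_def using assms by (intro exI[of _ i] exI[of _ ?n]) auto
qed

lemma (in monoid) subprod_closed: "set gs \<subseteq> carrier G \<Longrightarrow> subprod G gs es \<in> carrier G"
proof (induction gs arbitrary: es)
  case (Cons g gs)
  then show ?case by (cases es) auto
qed simp

lemma (in monoid) subprod_snoc:
  assumes "length es = length gs" "set gs \<subseteq> carrier G" "g \<in> carrier G"
  shows "subprod G (gs @ [g]) (es @ [e]) = subprod G gs es \<otimes> (if e then g else \<one>)"
  using assms
proof (induction gs arbitrary: es)
  case Nil
  then show ?case by simp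
next
  case (Cons a gs)
  then obtain e' es' where "es = e' # es'" "length es' = length gs"
    by (cases es) auto
  with Cons show ?case by (simp add: m_assoc subprod_closed)
qed

lemma (in monoid) subprod_take_Suc:
  assumes "j < length gs" "length es = j" "set gs \<subseteq> carrier G"
  shows "subprod G (take (Suc j) gs) (es @ [e]) =
    subprod G (take j gs) es \<otimes> (if e then gs ! j else \<one>)"
proof -
  have "gs ! j \<in> carrier G" using nth_mem[OF assms(1)] assms(3) by blast
  moreover have "set (take j gs) \<subseteq> carrier G" by (rule subset_trans[OF set_take_subset assms(3)])
  ultimately show ?thesis
    using subprod_snoc[of es "take j gs" "gs ! j" e] assms(1,2) by (simp add: take_Suc_conv_app_nth)
qed

lemma (in group) extend_tuple_along_prr_walk:
  assumes p: "prr_walk G n p" and x: "x \<in> carrier G" and "n < m"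
    and "t \<le> t'" "t' < length p"
    and start: "extend_tuple G m (p ! t) x \<in> prr_ball G m v d"
  shows "extend_tuple G m (p ! t') x \<in> prr_ball G m v (d + (t' - t))"
  using \<open>t \<le> t'\<close> \<open>t' < length p\<close>
proof (induction t' rule: dec_induct)
  case base
  then show ?case using start by simp
next
  case (step s)
  have "prr_step G (p ! s) (p ! Suc s)"
    using p step.hyps(2) step.prems unfolding prr_walk_def by simp
  then have "prr_step G (extend_tuple G m (p ! s) x) (extend_tuple G m (p ! Suc s) x)"
    by (rule prr_step_extend_tuple)
  moreover have "extend_tuple G m (p ! Suc s) x \<in> gen_tuples G m"
    using extend_tuple_in_gen_tuples prr_walk_nth_in_gen_tuples[OF p] step.prems x \<open>n < m\<close>
    by blast
  ultimately have "extend_tuple G m (p ! Suc s) x \<in> prr_ball G m v (Suc (d + (s - t)))"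
    using step.IH step.prems unfolding prr_ball_Suc by auto
  then show ?case using step.hyps(1) by (simp add: Suc_diff_le)
qed

lemma (in group) extend_tuple_mult_entry_in_prr_ball:
  assumes xs: "xs \<in> gen_tuples G n" and "n < m" and g: "g \<in> set xs" and x: "x \<in> carrier G"
    and start: "extend_tuple G m xs x \<in> prr_ball G m v d"
  shows "extend_tuple G m xs (x \<otimes> (if e then g else \<one>)) \<in> prr_ball G m v (Suc d)"
proof (cases e)
  case True
  obtain i where i: "i < length xs" "xs ! i = g"
    using g by (auto simp: in_set_conv_nth)
  have "length xs < m" using xs \<open>n < m\<close> unfolding gen_tuples_def by simp
  then have "prr_step G (extend_tuple G m xs x) (extend_tuple G m xs (x \<otimes> g))"
    using prr_step_extend_tuple_mult[OF i(1)] i(2) by metis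
  moreover have "g \<in> carrier G" using xs g unfolding gen_tuples_def by auto
  then have "extend_tuple G m xs (x \<otimes> g) \<in> gen_tuples G m"
    using extend_tuple_in_gen_tuples[OF xs _ \<open>n < m\<close>] x by simp
  ultimately show ?thesis using start True unfolding prr_ball_Suc by auto
next
  case False
  then show ?thesis using start prr_ball_mono[of d "Suc d"] x by auto
qed

lemma (in group) subprod_in_prr_ball:
  assumes p: "prr_walk G n p" and "n < m"
    and ts: "sorted ts" "length ts = length gs"
    and marks: "\<forall>j<length gs. ts ! j < length p \<and> gs ! j \<in> set (p ! (ts ! j))"
  shows "j \<le> length gs \<Longrightarrow> length es = j \<Longrightarrow> (\<forall>l<j. ts ! l \<le> t) \<Longrightarrow> t < length p \<Longrightarrow>
    extend_tuple G m (p ! t) (subprod G (take j gs) es)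
      \<in> prr_ball G m (extend_tuple G m (hd p) \<one>) (t + j)"
proof (induction j arbitrary: es t)
  case 0
  have "hd p \<in> gen_tuples G n" "p ! 0 = hd p" using p unfolding prr_walk_def
    by (auto simp: hd_conv_nth)
  then have "extend_tuple G m (p ! 0) \<one> \<in> prr_ball G m (extend_tuple G m (hd p) \<one>) 0"
    using extend_tuple_in_gen_tuples \<open>n < m\<close> by (simp add: prr_ball_0)
  then show ?case
    using extend_tuple_along_prr_walk[OF p _ \<open>n < m\<close>, of \<one> 0 t] 0 by fastforce
next
  case (Suc j)
  obtain es' e where es: "es = es' @ [e]" "length es' = j"
    using Suc.prems(2) by (cases es rule: rev_cases) auto
  have j: "j < length gs" "ts ! j < length p" "gs ! j \<in> set (p ! (ts ! j))"
    using Suc.prems(1) marks by auto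
  have gs_carrier: "set gs \<subseteq> carrier G"
    using marks prr_walk_nth_in_gen_tuples[OF p] unfolding gen_tuples_def
    by (fastforce simp: in_set_conv_nth)
  define x where "x = subprod G (take j gs) es'"
  have x: "x \<in> carrier G"
    unfolding x_def using subprod_closed subset_trans[OF set_take_subset gs_carrier] by blast
  define y where "y = x \<otimes> (if e then gs ! j else \<one>)"
  have y: "y \<in> carrier G"
    using x gs_carrier nth_mem[OF j(1)] unfolding y_def by auto
  have "\<forall>l<j. ts ! l \<le> ts ! j" using ts j(1) by (simp add: sorted_nth_mono)
  then have "extend_tuple G m (p ! (ts ! j)) x
      \<in> prr_ball G m (extend_tuple G m (hd p) \<one>) (ts ! j + j)"
    using Suc.IH[of es' "ts ! j"] Suc.prems(1) es j(2) unfolding x_def by simp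
  then have "extend_tuple G m (p ! (ts ! j)) y
      \<in> prr_ball G m (extend_tuple G m (hd p) \<one>) (Suc (ts ! j + j))"
    unfolding y_def using prr_walk_nth_in_gen_tuples[OF p j(2)] j(3) x \<open>n < m\<close>
    by (blast intro: extend_tuple_mult_entry_in_prr_ball)
  moreover have "ts ! j \<le> t" using Suc.prems(3) by simp
  ultimately have "extend_tuple G m (p ! t) y
      \<in> prr_ball G m (extend_tuple G m (hd p) \<one>) (Suc (ts ! j + j) + (t - ts ! j))"
    using extend_tuple_along_prr_walk[OF p y \<open>n < m\<close> _ Suc.prems(4)] by blast
  moreover have "Suc (ts ! j + j) + (t - ts ! j) = t + Suc j"
    using \<open>ts ! j \<le> t\<close> by simp
  moreover have "subprod G (take (Suc j) gs) es = y"
    unfolding x_def y_def es(1) using subprod_take_Suc[OF j(1) es(2) gs_carrier] .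
  ultimately show ?case by metis
qed

lemma (in group) card_prr_ball_ge_cubic:
  assumes p: "prr_walk G n p" and "n < m"
    and ts: "sorted ts" "length ts = length gs"
    and marks: "\<forall>j<length gs. ts ! j < length p \<and> gs ! j \<in> set (p ! (ts ! j))"
    and "cubic G gs" and r: "length p - 1 + length gs \<le> r"
  shows "2 ^ length gs \<le> card (prr_ball G m (extend_tuple G m (hd p) \<one>) r)"
proof -
  let ?t = "length p - 1"
  let ?Y = "extend_tuple G m (p ! ?t) ` {subprod G gs es | es. length es = length gs}"
  have "?t < length p" using p unfolding prr_walk_def by simp
  moreover have "\<forall>l<length gs. ts ! l \<le> ?t" using marks by fastforce
  ultimately have "?Y \<subseteq> prr_ball G m (extend_tuple G m (hd p) \<one>) (?t + length gs)"
    using subprod_in_prr_ball[OF p \<open>n < m\<close> ts marks, of "length gs" _ ?t] by auto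
  also have "\<dots> \<subseteq> prr_ball G m (extend_tuple G m (hd p) \<one>) r"
    using r by (rule prr_ball_mono)
  finally have "card ?Y \<le> card (prr_ball G m (extend_tuple G m (hd p) \<one>) r)"
    by (intro card_mono finite_prr_ball)
  moreover have "card ?Y = 2 ^ length gs"
    using \<open>cubic G gs\<close> card_image[OF inj_on_subset[OF inj_extend_tuple subset_UNIV]]
    unfolding cubic_def by metis
  ultimately show ?thesis by simp
qed

lemma log_dense_exponential_growth:
  fixes b :: "nat \<Rightarrow> nat" and c :: real
  assumes k: "log_dense k" and "c > 0"
    and bound: "\<And>i r. c * real (k i) \<le> real r \<Longrightarrow> 2 ^ k i \<le> b r"
  shows "\<exists>a>1. \<forall>\<^sub>F r in sequentially. a ^ r \<le> real (b r)"
proof -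
  obtain \<beta> :: real where \<beta>: "\<And>i. real (k (Suc i)) \<le> \<beta> * real (k i)"
    using k unfolding log_dense_def by blast
  have k_pos: "\<And>i. k i > 0" and "strict_mono k"
    using k unfolding log_dense_def by auto
  have "0 < real (k 1)" using k_pos by simp
  also have "\<dots> \<le> \<beta> * real (k 0)" using \<beta>[of 0] by simp
  finally have "\<beta> > 0" using k_pos[of 0] by (simp add: zero_less_mult_iff)
  define a where "a = 2 powr (1 / (c * \<beta>))"
  have "a > 1" unfolding a_def using \<open>c > 0\<close> \<open>\<beta> > 0\<close> by simp
  have "a ^ r \<le> real (b r)" if r: "c * real (k 0) \<le> real r" for r
  proof -
    let ?P = "\<lambda>i. real r < c * real (k i)"
    obtain N :: nat where "real r / c < real N" using reals_Archimedean2 by blast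
    also have "real N \<le> real (k N)" using seq_suble[OF \<open>strict_mono k\<close>] by simp
    finally have "?P N" using \<open>c > 0\<close> by (simp add: pos_divide_less_eq mult.commute)
    \<comment> \<open>i is the last index with c k_i \<le> r; log-density then bounds r by c \<beta> k_i.\<close>
    then obtain i where i: "\<not> ?P i" "?P (Suc i)"
      using ex_least_nat_less[of ?P N] r by auto
    have "real r < c * real (k (Suc i))" using i(2) .
    also have "\<dots> \<le> c * (\<beta> * real (k i))"
      using \<beta>[of i] \<open>c > 0\<close> by (simp add: mult_left_mono)
    finally have "real r < c * (\<beta> * real (k i))" .
    then have "real r / (c * \<beta>) \<le> real (k i)"
      using \<open>c > 0\<close> \<open>\<beta> > 0\<close> by (simp add: field_simps)
    have "a ^ r = 2 powr (real r * (1 / (c * \<beta>)))"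
      unfolding a_def by (simp add: powr_power)
    also have "\<dots> \<le> 2 powr real (k i)"
      using \<open>real r / (c * \<beta>) \<le> real (k i)\<close> by (intro powr_mono) auto
    also have "\<dots> = 2 ^ k i" by (simp add: powr_realpow)
    also have "\<dots> \<le> real (b r)"
      using bound[of i r] i(1) by (simp flip: of_nat_le_iff)
    finally show ?thesis .
  qed
  then have "\<forall>\<^sub>F r in sequentially. a ^ r \<le> real (b r)"
    by (intro eventually_sequentiallyI[of "nat \<lceil>c * real (k 0)\<rceil>"]) (simp add: nat_ceiling_le_eq)
  with \<open>a > 1\<close> show ?thesis by blast
qed

theorem lemma3p10:
  fixes G :: "('a, 'b) monoid_scheme" and n :: nat and S :: "'a list"
    and \<alpha> :: real and k :: "nat \<Rightarrow> nat"
  assumes "fin_gen_group G"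
    and "S \<in> gen_tuples G n"
    and "\<alpha> > 1"
    and "log_dense k"
    and "\<forall>i. \<exists>p ts gs. prr_walk G n p \<and> hd p = S \<and> real (length p - 1) \<le> \<alpha> * real (k i)
            \<and> length ts = k i \<and> sorted ts \<and> (\<forall>j < k i. ts!j < length p)
            \<and> length gs = k i \<and> cubic G gs
            \<and> (\<forall>j < k i. gs!j \<in> set (p!(ts!j)))"
  shows "\<forall>m \<ge> n + 1. exp_growth G m (prr_graph_S G m S)"
proof (intro allI impI)
  fix m assume "m \<ge> n + 1"
  then have "n < m" by simp
  interpret group G using assms(1) unfolding fin_gen_group_def by simp
  define v where "v = extend_tuple G m S \<one>\<^bsub>G\<^esub>"
  have "v \<in> prr_graph_S G m S"
    unfolding v_def using extend_tuple_one_in_prr_graph_S[OF assms(2) \<open>n < m\<close>] .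
  moreover have "2 ^ k i \<le> card (prr_ball G m v r)" if "(\<alpha> + 1) * real (k i) \<le> real r" for i r
  proof -
    obtain p ts gs where p: "prr_walk G n p" "hd p = S" "real (length p - 1) \<le> \<alpha> * real (k i)"
      and ts: "sorted ts" "length ts = length gs" and gs: "length gs = k i" "cubic G gs"
      and marks: "\<forall>j<length gs. ts ! j < length p \<and> gs ! j \<in> set (p ! (ts ! j))"
      using assms(5) by metis
    have "length p - 1 + length gs \<le> r" using p(3) gs(1) that by (simp add: algebra_simps)
    then show ?thesis
      using card_prr_ball_ge_cubic[OF p(1) \<open>n < m\<close> ts marks gs(2)] p(2) gs(1)
      unfolding v_def by simp
  qed
  then obtain a :: real where "a > 1" "\<forall>\<^sub>F r in sequentially. a ^ r \<le> real (card (prr_ball G m v r))"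
    using log_dense_exponential_growth[OF assms(4), where c = "\<alpha> + 1"
        and b = "\<lambda>r. card (prr_ball G m v r)"] assms(3) by auto
  ultimately show "exp_growth G m (prr_graph_S G m S)"
    unfolding exp_growth_def by blast
qed

end
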